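(* For the discrete-time Glauber dynamics for the ferromagnetic Ising model (with zero external field) on any finite graph with nonnegative interaction strengths, $t_{\mathrm{mix}}^+\ \ge\ \log 2\cdot(\mathtt{gap}^{-1}-1)$.
   Context: Let $G=(V,E)$ be a finite graph and $J=\{J_{uv}\ge0:uv\in E\}$. The Ising measure on $\{\pm1\}^V$ is $\mu(\sigma)=Z^{-1}\exp(\sum_{uv\in E}J_{uv}\sigma(u)\sigma(v))$. Glauber dynamics: at each step pick a uniform vertex $v$ and resample $\sigma(v)$ from its conditional law under $\mu$ given all other spins. $\mathtt{gap}=1-\lambda$, where $\lambda$ is the second largest eigenvalue of the transition kernel. $t_{\mathrm{mix}}^+=\min\{t:\|\mathbb P_+(X_t\in\cdot)-\mu\|_{TV}\le1/4\}$, where $\mathbb P_+$ refers to the chain started at the all-plus configuration and $\|\cdot\|_{TV}$ is total variation distance. *)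

theory Defs
  imports "Jordan_Normal_Form.Char_Poly" "HOL-Library.Multiset"
begin

text \<open>Vertices are 0,...,n-1. A spin configuration sigma in {+1,-1}^V is encoded by a
  natural number s < 2^n: the spin of vertex v is +1 iff bit v of s is set.\<close>

definition spin :: "nat \<Rightarrow> nat \<Rightarrow> real" where
  "spin s v = (if bit s v then 1 else -1)"

definition graph_edges :: "nat \<Rightarrow> nat set set" where
  "graph_edges n = {{u, v} | u v. u < n \<and> v < n \<and> u \<noteq> v}"

definition ising_weight :: "nat set set \<Rightarrow> (nat set \<Rightarrow> real) \<Rightarrow> nat \<Rightarrow> real" where
  "ising_weight E J s = exp (\<Sum>e\<in>E. J e * (\<Prod>v\<in>e. spin s v))"

definition ising_mu :: "nat \<Rightarrow> nat set set \<Rightarrow> (nat set \<Rightarrow> real) \<Rightarrow> nat \<Rightarrow> real" where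
  "ising_mu n E J s = ising_weight E J s / (\<Sum>t<2^n. ising_weight E J t)"

text \<open>Glauber transition probability from s to t: pick a uniform vertex v and resample
  the spin at v from its conditional law under mu given all other spins.\<close>
definition glauber :: "nat \<Rightarrow> nat set set \<Rightarrow> (nat set \<Rightarrow> real) \<Rightarrow> nat \<Rightarrow> nat \<Rightarrow> real" where
  "glauber n E J s t = (1 / real n) * (\<Sum>v<n.
      (if (\<forall>w<n. w \<noteq> v \<longrightarrow> (bit t w \<longleftrightarrow> bit s w))
       then ising_mu n E J t / (ising_mu n E J (set_bit v s) + ising_mu n E J (unset_bit v s))
       else 0))"

definition glauber_mat :: "nat \<Rightarrow> nat set set \<Rightarrow> (nat set \<Rightarrow> real) \<Rightarrow> real mat" where
  "glauber_mat n E J = mat (2^n) (2^n) (\<lambda>(s, t). glauber n E J s t)"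

text \<open>Second largest eigenvalue, eigenvalues counted with (algebraic) multiplicity.\<close>
definition second_largest_eigenvalue :: "real mat \<Rightarrow> real" where
  "second_largest_eigenvalue A = rev (sorted_list_of_multiset (proots (char_poly A))) ! 1"

definition spectral_gap :: "nat \<Rightarrow> nat set set \<Rightarrow> (nat set \<Rightarrow> real) \<Rightarrow> real" where
  "spectral_gap n E J = 1 - second_largest_eigenvalue (glauber_mat n E J)"

definition all_plus :: "nat \<Rightarrow> nat" where
  "all_plus n = 2^n - 1"

definition tv_from_plus :: "nat \<Rightarrow> nat set set \<Rightarrow> (nat set \<Rightarrow> real) \<Rightarrow> nat \<Rightarrow> real" where
  "tv_from_plus n E J t = (1/2) * (\<Sum>s<2^n.
      \<bar>(glauber_mat n E J ^\<^sub>m t) $$ (all_plus n, s) - ising_mu n E J s\<bar>)"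

definition tmix_plus :: "nat \<Rightarrow> nat set set \<Rightarrow> (nat set \<Rightarrow> real) \<Rightarrow> nat" where
  "tmix_plus n E J = (LEAST t. tv_from_plus n E J t \<le> 1/4)"

end

theory Submission
  imports Defs
begin

text \<open>Glauber dynamics for the ferromagnetic Ising model is monotone: since all couplings are
  nonnegative, the conditional probability of a plus spin at a vertex increases with the other
  spins, so the transition operator P maps functions that increase in the coordinatewise order
  of configurations to increasing functions. The model is invariant under the global spin flip,
  hence if the chain started at all-plus is within 1/4 of equilibrium at time T, so is the chain
  started at all-minus. For increasing h the values of P^T h lie between its values at the two
  extreme states, and comparing both with the equilibrium average shows that P^T halves the
  oscillation of h. An eigenfunction f with eigenvalue \<lambda> \<in> (0,1) is a difference of two
  increasing functions, so \<lambda>^(kT) osc f \<le> C 2^(-k) for all k. This forces \<lambda>^T \<le> 1/2, that is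
  T \<ge> log 2 / log (1/\<lambda>) \<ge> log 2 (1/(1-\<lambda>) - 1).\<close>

section \<open>Configurations as bit strings\<close>

lemma less_power2_iff_bits: "(s::nat) < 2 ^ n \<longleftrightarrow> (\<forall>w. bit s w \<longrightarrow> w < n)"
proof
  assume "s < 2 ^ n"
  then show "\<forall>w. bit s w \<longrightarrow> w < n"
    by (metis bit_take_bit_iff take_bit_nat_eq_self)
next
  assume "\<forall>w. bit s w \<longrightarrow> w < n"
  then have "take_bit n s = s"
    by (intro bit_eqI) (auto simp: bit_take_bit_iff)
  then show "s < 2 ^ n"
    by (metis take_bit_nat_eq_self_iff)
qed

lemma config_eqI:
  "(x::nat) < 2 ^ n \<Longrightarrow> y < 2 ^ n \<Longrightarrow> (\<And>w. w < n \<Longrightarrow> bit x w = bit y w) \<Longrightarrow> x = y"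
  by (rule bit_eqI) (metis less_power2_iff_bits)

lemma set_bit_less_power2: "v < n \<Longrightarrow> (s::nat) < 2 ^ n \<Longrightarrow> set_bit v s < 2 ^ n"
  by (auto simp: less_power2_iff_bits bit_set_bit_iff)

lemma unset_bit_less_power2: "(s::nat) < 2 ^ n \<Longrightarrow> unset_bit v s < 2 ^ n"
  by (auto simp: less_power2_iff_bits bit_unset_bit_iff)

lemma set_bit_neq_unset_bit: "set_bit v x \<noteq> unset_bit v (x::nat)"
  by (metis bit_set_bit_iff bit_unset_bit_iff possible_bit_nat)

lemma all_plus_eq_mask: "all_plus n = mask n"
  by (simp add: all_plus_def mask_eq_exp_minus_1)

lemma bit_all_plus: "bit (all_plus n) w \<longleftrightarrow> w < n"
  by (simp add: all_plus_eq_mask bit_mask_iff)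

lemma all_plus_less_power2: "all_plus n < 2 ^ n"
  by (simp add: all_plus_def)

lemma spin_set_bit: "spin (set_bit v s) u = (if u = v then 1 else spin s u)"
  by (auto simp: spin_def bit_set_bit_iff)

lemma spin_unset_bit: "spin (unset_bit v s) u = (if u = v then -1 else spin s u)"
  by (auto simp: spin_def bit_unset_bit_iff)

definition config_le :: "nat \<Rightarrow> nat \<Rightarrow> nat \<Rightarrow> bool" where
  "config_le n x y \<longleftrightarrow> (\<forall>v<n. bit x v \<longrightarrow> bit y v)"

definition config_increasing :: "nat \<Rightarrow> (nat \<Rightarrow> real) \<Rightarrow> bool" where
  "config_increasing n h \<longleftrightarrow> (\<forall>x<2 ^ n. \<forall>y<2 ^ n. config_le n x y \<longrightarrow> h x \<le> h y)"

lemma config_le_zero: "config_le n 0 x"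
  by (simp add: config_le_def)

lemma config_le_all_plus: "config_le n x (all_plus n)"
  by (simp add: config_le_def bit_all_plus)

lemma config_le_set_bit: "config_le n x x' \<Longrightarrow> config_le n (set_bit v x) (set_bit v x')"
  by (auto simp: config_le_def bit_set_bit_iff)

lemma config_le_unset_bit: "config_le n x x' \<Longrightarrow> config_le n (unset_bit v x) (unset_bit v x')"
  by (auto simp: config_le_def bit_unset_bit_iff)

lemma config_le_unset_bit_set_bit: "config_le n (unset_bit v x) (set_bit v x)"
  by (auto simp: config_le_def bit_unset_bit_iff bit_set_bit_iff)

lemma spin_product_increment_antimono:
  assumes "a \<noteq> b" "a < n" "b < n" "config_le n x x'"
  shows "spin (unset_bit v x') a * spin (unset_bit v x') b - spin (set_bit v x') a * spin (set_bit v x') b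
    \<le> spin (unset_bit v x) a * spin (unset_bit v x) b - spin (set_bit v x) a * spin (set_bit v x) b"
  using assms unfolding spin_set_bit spin_unset_bit by (auto simp: spin_def config_le_def)

definition flip_config :: "nat \<Rightarrow> nat \<Rightarrow> nat" where
  "flip_config n s = xor s (mask n)"

lemma bit_flip_config: "bit (flip_config n s) w \<longleftrightarrow> bit s w \<noteq> (w < n)"
  by (simp add: flip_config_def bit_xor_iff bit_mask_iff)

lemma flip_config_less_power2: "s < 2 ^ n \<Longrightarrow> flip_config n s < 2 ^ n"
  by (auto simp: less_power2_iff_bits bit_flip_config)

lemma flip_config_flip_config [simp]: "flip_config n (flip_config n s) = s"
  by (rule bit_eqI) (auto simp: bit_flip_config)

lemma bij_betw_flip_config: "bij_betw (flip_config n) {..<2 ^ n} {..<2 ^ n}"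
  by (rule bij_betw_byWitness[of _ "flip_config n"]) (auto simp: flip_config_less_power2)

lemma flip_config_all_plus: "flip_config n (all_plus n) = 0"
  by (rule bit_eqI) (simp add: bit_flip_config bit_all_plus)

lemma flip_config_set_bit: "v < n \<Longrightarrow> flip_config n (set_bit v s) = unset_bit v (flip_config n s)"
  by (rule bit_eqI) (auto simp: bit_flip_config bit_set_bit_iff bit_unset_bit_iff)

lemma flip_config_unset_bit: "v < n \<Longrightarrow> flip_config n (unset_bit v s) = set_bit v (flip_config n s)"
  by (rule bit_eqI) (auto simp: bit_flip_config bit_set_bit_iff bit_unset_bit_iff)

lemma spin_flip_config: "u < n \<Longrightarrow> spin (flip_config n s) u = - spin s u"
  by (auto simp: spin_def bit_flip_config)

definition plus_count :: "nat \<Rightarrow> nat \<Rightarrow> nat" where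
  "plus_count n s = card {v. v < n \<and> bit s v}"

lemma plus_count_le: "plus_count n s \<le> n"
  using card_mono[of "{..<n}" "{v. v < n \<and> bit s v}"] by (auto simp: plus_count_def)

lemma plus_count_mono: "config_le n x y \<Longrightarrow> plus_count n x \<le> plus_count n y"
  unfolding plus_count_def config_le_def by (rule card_mono) auto

lemma plus_count_strict_mono:
  assumes "config_le n x y" "x < 2 ^ n" "y < 2 ^ n" "x \<noteq> y"
  shows "plus_count n x < plus_count n y"
proof -
  obtain w where "w < n" "bit x w \<noteq> bit y w"
    using config_eqI[OF assms(2,3)] assms(4) by blast
  then have "{v. v < n \<and> bit x v} \<subset> {v. v < n \<and> bit y v}"
    using assms(1) unfolding config_le_def by auto
  then show ?thesis
    unfolding plus_count_def by (rule psubset_card_mono[rotated]) simp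
qed

lemma config_increasing_plus_count_minus:
  fixes f :: "nat \<Rightarrow> real"
  assumes f_bound: "\<And>y. y < 2 ^ n \<Longrightarrow> \<bar>f y\<bar> \<le> B" and "2 * B \<le> K"
  shows "config_increasing n (\<lambda>y. K * real (plus_count n y) - f y)"
  unfolding config_increasing_def
proof (intro allI impI)
  fix x y assume x: "x < 2 ^ n" and y: "y < 2 ^ n" and le: "config_le n x y"
  have "0 \<le> K"
    using f_bound[of 0] assms(2) by simp
  show "K * real (plus_count n x) - f x \<le> K * real (plus_count n y) - f y"
  proof (cases "x = y")
    case False
    have "real (plus_count n x) + 1 \<le> real (plus_count n y)"
      using plus_count_strict_mono[OF le x y False] by linarith
    then have "K * (real (plus_count n x) + 1) \<le> K * real (plus_count n y)"
      using \<open>0 \<le> K\<close> by (intro mult_left_mono) auto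
    moreover have "f y - f x \<le> 2 * B"
      using f_bound[OF x] f_bound[OF y] by linarith
    ultimately show ?thesis
      using assms(2) by (simp add: algebra_simps)
  qed simp
qed

lemma increasing_difference_decomposition:
  fixes f :: "nat \<Rightarrow> real"
  obtains g1 g2 D where "config_increasing n g1" "config_increasing n g2"
    "\<And>y. f y = g1 y - g2 y"
    "\<And>y y'. y < 2 ^ n \<Longrightarrow> y' < 2 ^ n \<Longrightarrow> g1 y - g1 y' \<le> D \<and> g2 y - g2 y' \<le> D"
proof -
  define B where "B = Max ((\<lambda>y. \<bar>f y\<bar>) ` {..<2 ^ n})"
  have f_bound: "\<bar>f y\<bar> \<le> B" if "y < 2 ^ n" for y
    unfolding B_def using that by (intro Max_ge) auto
  define g1 where "g1 y = 2 * B * real (plus_count n y)" for y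
  have "config_increasing n g1"
    unfolding config_increasing_def g1_def
    using f_bound[of 0] plus_count_mono by (auto intro!: mult_left_mono)
  moreover have "config_increasing n (\<lambda>y. g1 y - f y)"
    unfolding g1_def using f_bound by (intro config_increasing_plus_count_minus) auto
  moreover have "g1 y - g1 y' \<le> 2 * B * real n + 2 * B \<and> (g1 y - f y) - (g1 y' - f y') \<le> 2 * B * real n + 2 * B"
    if "y < 2 ^ n" "y' < 2 ^ n" for y y'
  proof -
    have "2 * B * real (plus_count n y) \<le> 2 * B * real n"
      using f_bound[of 0] plus_count_le[of n y] by (intro mult_left_mono) auto
    moreover have "0 \<le> 2 * B * real (plus_count n y')"
      using f_bound[of 0] by simp
    moreover have "f y' - f y \<le> 2 * B" "0 \<le> B"
      using f_bound[OF that(1)] f_bound[OF that(2)] by linarith+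
    ultimately show ?thesis
      unfolding g1_def by (intro conjI) linarith+
  qed
  ultimately show ?thesis
    using that[of g1 "\<lambda>y. g1 y - f y"] by auto
qed

lemma weighted_average_bounds:
  fixes Q h :: "'a \<Rightarrow> real"
  assumes "\<And>y. y \<in> S \<Longrightarrow> Q y \<ge> 0" "sum Q S = 1"
    and "\<And>y. y \<in> S \<Longrightarrow> a \<le> h y \<and> h y \<le> b"
  shows "a \<le> (\<Sum>y\<in>S. Q y * h y) \<and> (\<Sum>y\<in>S. Q y * h y) \<le> b"
proof
  have "a = (\<Sum>y\<in>S. Q y * a)"
    using assms(2) by (simp flip: sum_distrib_right)
  also have "\<dots> \<le> (\<Sum>y\<in>S. Q y * h y)"
    using assms(1,3) by (intro sum_mono mult_left_mono) auto
  finally show "a \<le> (\<Sum>y\<in>S. Q y * h y)" .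
next
  have "(\<Sum>y\<in>S. Q y * h y) \<le> (\<Sum>y\<in>S. Q y * b)"
    using assms(1,3) by (intro sum_mono mult_left_mono) auto
  also have "\<dots> = b"
    using assms(2) by (simp flip: sum_distrib_right)
  finally show "(\<Sum>y\<in>S. Q y * h y) \<le> b" .
qed

lemma kernel_oscillation_contract:
  fixes Q :: "'a \<Rightarrow> 'a \<Rightarrow> real" and h :: "'a \<Rightarrow> real"
  assumes "finite S" "S \<noteq> {}"
    and Q_ge: "\<And>x y. x \<in> S \<Longrightarrow> y \<in> S \<Longrightarrow> \<delta> \<le> Q x y"
    and Q_sum: "\<And>x. x \<in> S \<Longrightarrow> (\<Sum>y\<in>S. Q x y) = 1"
    and h_osc: "\<And>y y'. y \<in> S \<Longrightarrow> y' \<in> S \<Longrightarrow> h y - h y' \<le> D"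
    and x: "x \<in> S" and x': "x' \<in> S"
  shows "(\<Sum>y\<in>S. Q x y * h y) - (\<Sum>y\<in>S. Q x' y * h y) \<le> (1 - real (card S) * \<delta>) * D"
proof -
  define a where "a = Min (h ` S)"
  have "a \<in> h ` S"
    unfolding a_def using assms(1,2) by (intro Min_in) auto
  then obtain y0 where y0: "y0 \<in> S" "a = h y0" by auto
  have a_le: "a \<le> h y" if "y \<in> S" for y
    unfolding a_def using assms(1) that by simp
  have h_a: "0 \<le> h y - a" "h y - a \<le> D" if "y \<in> S" for y
    using a_le[OF that] h_osc[OF that y0(1)] y0(2) by auto
  have shifted: "(\<Sum>y\<in>S. (Q u y - \<delta>) * (h y - a))
      = (\<Sum>y\<in>S. Q u y * h y) - a - \<delta> * (\<Sum>y\<in>S. h y - a)" if "u \<in> S" for u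
  proof -
    have "(\<Sum>y\<in>S. (Q u y - \<delta>) * (h y - a)) = (\<Sum>y\<in>S. Q u y * h y - a * Q u y - \<delta> * (h y - a))"
      by (intro sum.cong refl) (simp add: algebra_simps)
    also have "\<dots> = (\<Sum>y\<in>S. Q u y * h y) - (\<Sum>y\<in>S. a * Q u y) - (\<Sum>y\<in>S. \<delta> * (h y - a))"
      by (simp only: sum_subtractf)
    also have "\<dots> = (\<Sum>y\<in>S. Q u y * h y) - a * (\<Sum>y\<in>S. Q u y) - \<delta> * (\<Sum>y\<in>S. h y - a)"
      by (simp only: sum_distrib_left)
    finally show ?thesis
      using Q_sum[OF that] by simp
  qed
  have "(\<Sum>y\<in>S. (Q x y - \<delta>) * (h y - a)) \<le> (\<Sum>y\<in>S. (Q x y - \<delta>) * D)"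
    using h_a Q_ge x by (intro sum_mono mult_left_mono) auto
  also have "\<dots> = (1 - real (card S) * \<delta>) * D"
    using Q_sum[OF x] by (simp add: sum_distrib_right[symmetric] sum_subtractf)
  finally have upper: "(\<Sum>y\<in>S. (Q x y - \<delta>) * (h y - a)) \<le> (1 - real (card S) * \<delta>) * D" .
  have lower: "0 \<le> (\<Sum>y\<in>S. (Q x' y - \<delta>) * (h y - a))"
    using h_a Q_ge x' by (intro sum_nonneg mult_nonneg_nonneg) auto
  show ?thesis
    using upper lower shifted[OF x] shifted[OF x'] by linarith
qed

lemma sum_diff_le_l1_times_radius:
  fixes p q h :: "'a \<Rightarrow> real"
  assumes "sum p S = sum q S" and "\<And>s. s \<in> S \<Longrightarrow> \<bar>h s - c\<bar> \<le> r"
  shows "(\<Sum>s\<in>S. p s * h s) - (\<Sum>s\<in>S. q s * h s) \<le> (\<Sum>s\<in>S. \<bar>p s - q s\<bar>) * r"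
proof -
  have "(\<Sum>s\<in>S. (p s - q s) * (h s - c)) = (\<Sum>s\<in>S. p s * h s - q s * h s - c * (p s - q s))"
    by (intro sum.cong refl) (simp add: algebra_simps)
  also have "\<dots> = (\<Sum>s\<in>S. p s * h s) - (\<Sum>s\<in>S. q s * h s) - c * (sum p S - sum q S)"
    by (simp add: sum_subtractf right_diff_distrib sum_distrib_left)
  finally have "(\<Sum>s\<in>S. p s * h s) - (\<Sum>s\<in>S. q s * h s) = (\<Sum>s\<in>S. (p s - q s) * (h s - c))"
    using assms(1) by simp
  also have "\<dots> \<le> (\<Sum>s\<in>S. \<bar>p s - q s\<bar> * r)"
  proof (rule sum_mono)
    fix s assume "s \<in> S"
    have "(p s - q s) * (h s - c) \<le> \<bar>p s - q s\<bar> * \<bar>h s - c\<bar>"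
      by (simp flip: abs_mult)
    also have "\<dots> \<le> \<bar>p s - q s\<bar> * r"
      using assms(2)[OF \<open>s \<in> S\<close>] by (rule mult_left_mono) simp
    finally show "(p s - q s) * (h s - c) \<le> \<bar>p s - q s\<bar> * r" .
  qed
  also have "\<dots> = (\<Sum>s\<in>S. \<bar>p s - q s\<bar>) * r"
    by (simp add: sum_distrib_right)
  finally show ?thesis .
qed

lemma odd_degree_real_poly_has_root:
  fixes q :: "real poly"
  assumes "odd (degree q)"
  shows "\<exists>r. poly q r = 0"
proof -
  have positive_case: "\<exists>r. poly p r = 0" if odd_p: "odd (degree p)" and lc_pos: "lead_coeff p > 0"
    for p :: "real poly"
  proof -
    obtain X1 where X1: "\<forall>x\<ge>X1. poly p x \<ge> lead_coeff p"
      using poly_pinfty_gt_lc[OF lc_pos] by blast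
    define p' where "p' = - (p \<circ>\<^sub>p [:0, -1:])"
    have "lead_coeff (p \<circ>\<^sub>p [:0, -1:]) = lead_coeff p * (-1) ^ degree p"
      using lead_coeff_comp[of "[:0, -1::real:]" p] by simp
    then have "lead_coeff p' = lead_coeff p"
      unfolding p'_def using odd_p by simp
    then obtain X2 where X2: "\<forall>x\<ge>X2. poly p' x \<ge> lead_coeff p"
      using poly_pinfty_gt_lc[of p'] lc_pos by auto
    define R where "R = \<bar>X1\<bar> + \<bar>X2\<bar> + 1"
    have "poly p R > 0"
      using X1 lc_pos unfolding R_def by (smt (verit))
    moreover have "poly p' R > 0"
      using X2 lc_pos unfolding R_def by (smt (verit))
    then have "poly p (-R) < 0"
      unfolding p'_def by (simp add: poly_pcompose)
    moreover have "-R < R"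
      unfolding R_def by simp
    ultimately show ?thesis
      using poly_IVT_pos[of "-R" R p] by blast
  qed
  have "lead_coeff q \<noteq> 0"
    using assms by auto
  then consider "lead_coeff q > 0" | "lead_coeff (- q) > 0"
    by force
  then show ?thesis
    using positive_case[of q] positive_case[of "- q"] assms by cases auto
qed

lemma even_degree_real_poly_two_roots:
  fixes p :: "real poly"
  assumes "p \<noteq> 0" "even (degree p)" "poly p r = 0"
  shows "size (proots p) \<ge> 2"
proof -
  obtain q where q: "p = [:-r, 1:] * q"
    using assms(3) poly_eq_0_iff_dvd by blast
  have q_nz: "q \<noteq> 0" and factor_nz: "[:-r, 1:] \<noteq> 0"
    using assms(1) q by auto
  have "degree p = 1 + degree q"
    unfolding q by (simp only: degree_mult_eq[OF factor_nz q_nz]) simp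
  then obtain r' where "poly q r' = 0"
    using odd_degree_real_poly_has_root assms(2) by force
  then have "r' \<in># proots q"
    using q_nz by simp
  then have "proots q \<noteq> {#}"
    by auto
  moreover have "proots p = {#r#} + proots q"
    unfolding q proots_mult[OF factor_nz q_nz] using proots_linear_factor[of r] by simp
  ultimately show ?thesis
    by (simp add: Suc_le_eq nonempty_has_size)
qed

lemma second_largest_eigenvalue_is_root:
  fixes A :: "real mat"
  assumes A: "A \<in> carrier_mat m m" and "even m" and "poly (char_poly A) r = 0"
  shows "poly (char_poly A) (second_largest_eigenvalue A) = 0"
proof -
  let ?p = "char_poly A"
  have "degree ?p = m" "lead_coeff ?p = 1"
    using degree_monic_char_poly[OF A] by auto
  then have p_nz: "?p \<noteq> 0" by auto
  have "size (proots ?p) \<ge> 2"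
    using even_degree_real_poly_two_roots[OF p_nz] assms(2,3) \<open>degree ?p = m\<close> by simp
  then have "rev (sorted_list_of_multiset (proots ?p)) ! 1 \<in> set (rev (sorted_list_of_multiset (proots ?p)))"
    by (intro nth_mem) (metis length_rev mset_sorted_list_of_multiset size_mset One_nat_def
        Suc_1 Suc_le_lessD)
  then show ?thesis
    using p_nz unfolding second_largest_eigenvalue_def by simp
qed

text \<open>For lam outside (0,1) the left-hand side is nonpositive, for lam = 1 because 1/0 = 0.\<close>

lemma ln2_relaxation_bound:
  fixes lam :: real and T :: nat
  assumes "0 < lam \<Longrightarrow> lam < 1 \<Longrightarrow> 2 * lam ^ T \<le> 1"
  shows "ln 2 * (1 / (1 - lam) - 1) \<le> real T"
proof (cases "0 < lam \<and> lam < 1")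
  case True
  then have l0: "0 < lam" and l1: "lam < 1" by auto
  have "ln (lam ^ T) \<le> ln (1 / 2)"
    using assms l0 l1 by (subst ln_le_cancel_iff) auto
  then have "real T * ln lam \<le> - ln 2"
    using l0 by (simp add: ln_realpow ln_div)
  moreover have "1 - 1 / lam \<le> ln lam"
    using ln_le_minus_one[of "1 / lam"] l0 by (simp add: ln_div)
  then have "real T * (1 - 1 / lam) \<le> real T * ln lam"
    by (intro mult_left_mono) auto
  ultimately have "ln 2 \<le> real T * (1 / lam - 1)"
    by (simp add: algebra_simps)
  also have "1 / lam - 1 = (1 - lam) / lam"
    using l0 by (simp add: field_simps)
  finally have "ln 2 * lam \<le> real T * (1 - lam)"
    using l0 by (simp add: field_simps)
  then have "ln 2 * (lam / (1 - lam)) \<le> real T"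
    using l1 by (simp add: divide_simps mult_ac)
  moreover have "1 / (1 - lam) - 1 = lam / (1 - lam)"
    using l1 by (simp add: field_simps)
  ultimately show ?thesis by simp
next
  case False
  then have "1 / (1 - lam) - 1 \<le> 0"
    by (cases "lam \<le> 0") (auto simp: divide_simps)
  then show ?thesis
    by (smt (verit) ln_ge_zero mult_nonneg_nonpos of_nat_0_le_iff)
qed

section \<open>Glauber dynamics of the ferromagnetic Ising model\<close>

locale ising_glauber =
  fixes n :: nat and E :: "nat set set" and J :: "nat set \<Rightarrow> real"
  assumes n_pos: "n \<ge> 1"
    and edges: "E \<subseteq> graph_edges n"
    and ferromagnetic: "\<forall>e\<in>E. J e \<ge> 0"
begin

abbreviation "N \<equiv> (2::nat) ^ n"
abbreviation "mu \<equiv> ising_mu n E J"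
abbreviation "P \<equiv> glauber n E J"
abbreviation "M \<equiv> glauber_mat n E J"

definition log_weight :: "nat \<Rightarrow> real" where
  "log_weight s = (\<Sum>e\<in>E. J e * (\<Prod>v\<in>e. spin s v))"

definition pair_mass :: "nat \<Rightarrow> nat \<Rightarrow> real" where
  "pair_mass v s = mu (set_bit v s) + mu (unset_bit v s)"

definition plus_prob :: "nat \<Rightarrow> nat \<Rightarrow> real" where
  "plus_prob v s = mu (set_bit v s) / pair_mass v s"

definition heat_bath :: "nat \<Rightarrow> (nat \<Rightarrow> real) \<Rightarrow> nat \<Rightarrow> real" where
  "heat_bath v h s =
    (mu (set_bit v s) * h (set_bit v s) + mu (unset_bit v s) * h (unset_bit v s)) / pair_mass v s"

definition glauber_op :: "(nat \<Rightarrow> real) \<Rightarrow> nat \<Rightarrow> real" where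
  "glauber_op h x = (\<Sum>y<N. P x y * h y)"

lemma ising_weight_eq: "ising_weight E J s = exp (log_weight s)"
  by (simp add: ising_weight_def log_weight_def)

lemma weight_sum_pos: "(\<Sum>t<N. ising_weight E J t) > 0"
  by (rule sum_pos) (auto simp: ising_weight_def lessThan_empty_iff)

lemma mu_pos: "mu s > 0"
  using weight_sum_pos by (simp add: ising_mu_def ising_weight_def)

lemma mu_sum: "(\<Sum>s<N. mu s) = 1"
  using weight_sum_pos unfolding ising_mu_def by (simp flip: sum_divide_distrib)

lemma pair_mass_pos: "pair_mass v s > 0"
  by (simp add: pair_mass_def add_pos_pos mu_pos)

lemma edge_endpoints: "e \<in> E \<Longrightarrow> \<exists>a b. e = {a, b} \<and> a < n \<and> b < n \<and> a \<noteq> b"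
  using edges by (auto simp: graph_edges_def)

lemma configs_agreeing_off_vertex:
  assumes "x < N" "v < n"
  shows "{y. y < N \<and> (\<forall>w<n. w \<noteq> v \<longrightarrow> (bit y w \<longleftrightarrow> bit x w))} = {set_bit v x, unset_bit v x}"
proof (intro equalityI subsetI)
  fix y assume "y \<in> {y. y < N \<and> (\<forall>w<n. w \<noteq> v \<longrightarrow> (bit y w \<longleftrightarrow> bit x w))}"
  then have y: "y < N" "\<forall>w<n. w \<noteq> v \<longrightarrow> (bit y w \<longleftrightarrow> bit x w)" by auto
  show "y \<in> {set_bit v x, unset_bit v x}"
  proof (cases "bit y v")
    case True
    then have "y = set_bit v x"
      using y assms by (intro config_eqI[of _ n]) (auto simp: set_bit_less_power2 bit_set_bit_iff)
    then show ?thesis by simp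
  next
    case False
    then have "y = unset_bit v x"
      using y assms by (intro config_eqI[of _ n]) (auto simp: unset_bit_less_power2 bit_unset_bit_iff)
    then show ?thesis by simp
  qed
qed (use assms in \<open>auto simp: set_bit_less_power2 unset_bit_less_power2 bit_set_bit_iff bit_unset_bit_iff\<close>)

lemma glauber_op_eq_heat_bath:
  assumes x: "x < N"
  shows "glauber_op h x = (\<Sum>v<n. heat_bath v h x) / real n"
proof -
  define A where "A v y \<longleftrightarrow> (\<forall>w<n. w \<noteq> v \<longrightarrow> (bit y w \<longleftrightarrow> bit x w))" for v and y :: nat
  have "glauber_op h x = (\<Sum>y<N. \<Sum>v<n. (1 / real n) * (if A v y then mu y / pair_mass v x * h y else 0))"
    unfolding glauber_op_def glauber_def pair_mass_def A_def
    by (auto intro!: sum.cong simp: sum_distrib_left sum_distrib_right)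
  also have "\<dots> = (\<Sum>v<n. (1 / real n) * (\<Sum>y<N. if A v y then mu y / pair_mass v x * h y else 0))"
    by (subst sum.swap) (simp add: sum_distrib_left)
  also have "\<dots> = (\<Sum>v<n. (1 / real n) * heat_bath v h x)"
  proof (rule sum.cong[OF refl])
    fix v assume "v \<in> {..<n}"
    then have "{..<N} \<inter> {y. A v y} = {set_bit v x, unset_bit v x}"
      using configs_agreeing_off_vertex[OF x] unfolding A_def by auto
    have "(\<Sum>y<N. if A v y then mu y / pair_mass v x * h y else 0)
        = (\<Sum>y\<in>{..<N} \<inter> {y. A v y}. mu y / pair_mass v x * h y)"
      by (subst sum.inter_restrict) auto
    also have "\<dots> = (\<Sum>y\<in>{set_bit v x, unset_bit v x}. mu y / pair_mass v x * h y)"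
      unfolding \<open>{..<N} \<inter> {y. A v y} = {set_bit v x, unset_bit v x}\<close> ..
    also have "\<dots> = heat_bath v h x"
      using set_bit_neq_unset_bit[of v x] by (simp add: heat_bath_def add_divide_distrib)
    finally show "(1 / real n) * (\<Sum>y<N. if A v y then mu y / pair_mass v x * h y else 0)
        = (1 / real n) * heat_bath v h x" by simp
  qed
  finally show ?thesis
    by (simp add: sum_divide_distrib)
qed

lemma heat_bath_const: "heat_bath v (\<lambda>_. c) x = c"
  using pair_mass_pos[of v x] by (simp add: heat_bath_def pair_mass_def field_simps)

lemma glauber_nonneg: "P x y \<ge> 0"
  unfolding glauber_def
  by (auto intro!: mult_nonneg_nonneg sum_nonneg divide_nonneg_nonneg add_nonneg_nonneg
      less_imp_le[OF mu_pos])

lemma glauber_row_sum: "x < N \<Longrightarrow> (\<Sum>y<N. P x y) = 1"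
  using glauber_op_eq_heat_bath[of x "\<lambda>_. 1"] n_pos
  by (simp add: glauber_op_def heat_bath_const)

lemma glauber_op_bounds:
  "(\<And>y. y < N \<Longrightarrow> a \<le> h y \<and> h y \<le> b) \<Longrightarrow> x < N \<Longrightarrow> a \<le> glauber_op h x \<and> glauber_op h x \<le> b"
  unfolding glauber_op_def
  by (rule weighted_average_bounds) (auto simp: glauber_nonneg glauber_row_sum)

lemma glauber_op_const: "x < N \<Longrightarrow> glauber_op (\<lambda>_. c) x = c"
  using glauber_op_bounds[of c "\<lambda>_. c" c x] by auto

lemma glauber_op_cong: "(\<And>y. y < N \<Longrightarrow> g y = h y) \<Longrightarrow> glauber_op g x = glauber_op h x"
  unfolding glauber_op_def by (auto intro!: sum.cong)

lemma glauber_op_diff: "glauber_op (\<lambda>y. g y - h y) = (\<lambda>x. glauber_op g x - glauber_op h x)"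
  unfolding glauber_op_def by (auto simp: sum_subtractf right_diff_distrib)

lemma glauber_op_scale: "glauber_op (\<lambda>y. c * g y) x = c * glauber_op g x"
  unfolding glauber_op_def by (auto simp: sum_distrib_left mult_ac)

lemma glauber_op_nonneg: "(\<And>y. y < N \<Longrightarrow> g y \<ge> 0) \<Longrightarrow> glauber_op g x \<ge> 0"
  unfolding glauber_op_def by (auto intro!: sum_nonneg mult_nonneg_nonneg glauber_nonneg)

lemma glauber_iter_bounds:
  "(\<And>y. y < N \<Longrightarrow> a \<le> h y \<and> h y \<le> b) \<Longrightarrow> x < N \<Longrightarrow>
    a \<le> (glauber_op ^^ t) h x \<and> (glauber_op ^^ t) h x \<le> b"
proof (induction t arbitrary: h)
  case (Suc t)
  have "\<And>y. y < N \<Longrightarrow> a \<le> glauber_op h y \<and> glauber_op h y \<le> b"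
    using glauber_op_bounds Suc.prems by blast
  from Suc.IH[OF this Suc.prems(2)] show ?case
    by (simp add: funpow_Suc_right del: funpow.simps)
qed simp

lemma glauber_iter_diff:
  "(glauber_op ^^ t) (\<lambda>y. g y - h y) = (\<lambda>x. (glauber_op ^^ t) g x - (glauber_op ^^ t) h x)"
  by (induction t) (simp_all add: glauber_op_diff)

lemma glauber_iter_eigen:
  assumes "\<And>x. x < N \<Longrightarrow> glauber_op f x = c * f x"
  shows "x < N \<Longrightarrow> (glauber_op ^^ t) f x = c ^ t * f x"
proof (induction t arbitrary: x)
  case (Suc t)
  have "(glauber_op ^^ Suc t) f x = glauber_op (\<lambda>y. c ^ t * f y) x"
    using Suc.IH by (auto intro: glauber_op_cong)
  also have "\<dots> = c ^ Suc t * f x"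
    using assms[OF Suc.prems] by (simp add: glauber_op_scale)
  finally show ?case .
qed simp

subsection \<open>Monotonicity\<close>

lemma log_weight_increment_antimono:
  assumes "config_le n x x'"
  shows "log_weight (unset_bit v x') - log_weight (set_bit v x')
    \<le> log_weight (unset_bit v x) - log_weight (set_bit v x)"
proof -
  have increment: "log_weight (unset_bit v s) - log_weight (set_bit v s)
      = (\<Sum>e\<in>E. J e * ((\<Prod>u\<in>e. spin (unset_bit v s) u) - (\<Prod>u\<in>e. spin (set_bit v s) u)))" for s
    unfolding log_weight_def by (simp add: sum_subtractf right_diff_distrib)
  show ?thesis
    unfolding increment
  proof (rule sum_mono)
    fix e assume e: "e \<in> E"
    then obtain a b where ab: "e = {a, b}" "a < n" "b < n" "a \<noteq> b"
      using edge_endpoints by blast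
    have "(\<Prod>u\<in>e. spin (unset_bit v x') u) - (\<Prod>u\<in>e. spin (set_bit v x') u)
      \<le> (\<Prod>u\<in>e. spin (unset_bit v x) u) - (\<Prod>u\<in>e. spin (set_bit v x) u)"
      using spin_product_increment_antimono[OF ab(4,2,3) assms, of v] ab(1,4) by simp
    then show "J e * ((\<Prod>u\<in>e. spin (unset_bit v x') u) - (\<Prod>u\<in>e. spin (set_bit v x') u))
      \<le> J e * ((\<Prod>u\<in>e. spin (unset_bit v x) u) - (\<Prod>u\<in>e. spin (set_bit v x) u))"
      using ferromagnetic e by (intro mult_left_mono) auto
  qed
qed

lemma plus_prob_mono:
  assumes "config_le n x x'"
  shows "plus_prob v x \<le> plus_prob v x'"
proof -
  have plus_prob_eq: "plus_prob v s = exp (log_weight (set_bit v s))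
      / (exp (log_weight (set_bit v s)) + exp (log_weight (unset_bit v s)))" for s
    using weight_sum_pos
    unfolding plus_prob_def pair_mass_def ising_mu_def ising_weight_eq
    by (simp flip: add_divide_distrib)
  have "log_weight (unset_bit v x') + log_weight (set_bit v x)
      \<le> log_weight (unset_bit v x) + log_weight (set_bit v x')"
    using log_weight_increment_antimono[OF assms, of v] by simp
  then have "exp (log_weight (unset_bit v x')) * exp (log_weight (set_bit v x))
      \<le> exp (log_weight (unset_bit v x)) * exp (log_weight (set_bit v x'))"
    by (simp flip: exp_add)
  moreover have frac_mono: "a / (a + b) \<le> a' / (a' + b')"
    if "0 < a" "0 < b" "0 < a'" "0 < b'" "b' * a \<le> b * a'" for a b a' b' :: real
    using that by (simp add: divide_simps) (simp add: algebra_simps)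
  ultimately show ?thesis
    unfolding plus_prob_eq by (intro frac_mono) auto
qed

lemma heat_bath_eq_plus_prob:
  "heat_bath v h s = h (unset_bit v s) + plus_prob v s * (h (set_bit v s) - h (unset_bit v s))"
  using pair_mass_pos[of v s]
  unfolding heat_bath_def plus_prob_def pair_mass_def by (simp add: field_simps)

lemma heat_bath_mono:
  assumes h: "config_increasing n h" and le: "config_le n x x'"
    and x: "x < N" and x': "x' < N" and v: "v < n"
  shows "heat_bath v h x \<le> heat_bath v h x'"
proof -
  have p01: "0 \<le> plus_prob v s" "plus_prob v s \<le> 1" for s
    using mu_pos[of "set_bit v s"] mu_pos[of "unset_bit v s"]
    unfolding plus_prob_def pair_mass_def by auto
  have h_unset: "h (unset_bit v x) \<le> h (unset_bit v x')"
    using h config_le_unset_bit[OF le] unset_bit_less_power2 x x'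
    unfolding config_increasing_def by blast
  have h_set: "h (set_bit v x) \<le> h (set_bit v x')"
    using h config_le_set_bit[OF le] set_bit_less_power2[OF v] x x'
    unfolding config_increasing_def by blast
  have h_step: "h (unset_bit v x') \<le> h (set_bit v x')"
    using h config_le_unset_bit_set_bit set_bit_less_power2[OF v] unset_bit_less_power2 x'
    unfolding config_increasing_def by blast
  have "heat_bath v h x = (1 - plus_prob v x) * h (unset_bit v x) + plus_prob v x * h (set_bit v x)"
    unfolding heat_bath_eq_plus_prob by (simp add: algebra_simps)
  also have "\<dots> \<le> (1 - plus_prob v x) * h (unset_bit v x') + plus_prob v x * h (set_bit v x')"
    using p01[of x] h_unset h_set by (intro add_mono mult_left_mono) auto
  also have "\<dots> = h (unset_bit v x') + plus_prob v x * (h (set_bit v x') - h (unset_bit v x'))"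
    by (simp add: algebra_simps)
  also have "\<dots> \<le> heat_bath v h x'"
    unfolding heat_bath_eq_plus_prob
    using plus_prob_mono[OF le] h_step by (intro add_left_mono mult_right_mono) auto
  finally show ?thesis .
qed

lemma glauber_op_increasing: "config_increasing n h \<Longrightarrow> config_increasing n (glauber_op h)"
  unfolding config_increasing_def[of n "glauber_op h"]
  by (auto simp: glauber_op_eq_heat_bath intro!: divide_right_mono sum_mono heat_bath_mono)

lemma glauber_iter_increasing: "config_increasing n h \<Longrightarrow> config_increasing n ((glauber_op ^^ t) h)"
  by (induction t) (simp_all add: glauber_op_increasing)

subsection \<open>Spin-flip symmetry and reversibility\<close>

lemma mu_flip_config: "mu (flip_config n s) = mu s"
proof -
  have "log_weight (flip_config n s) = log_weight s"
    unfolding log_weight_def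
  proof (rule sum.cong[OF refl])
    fix e assume "e \<in> E"
    then obtain a b where "e = {a, b}" "a < n" "b < n" "a \<noteq> b"
      using edge_endpoints by blast
    then show "J e * (\<Prod>v\<in>e. spin (flip_config n s) v) = J e * (\<Prod>v\<in>e. spin s v)"
      by (simp add: spin_flip_config)
  qed
  then show ?thesis
    by (simp add: ising_mu_def ising_weight_eq)
qed

lemma heat_bath_flip_config:
  assumes "v < n"
  shows "heat_bath v h (flip_config n x) = heat_bath v (\<lambda>y. h (flip_config n y)) x"
proof -
  have "set_bit v (flip_config n x) = flip_config n (unset_bit v x)"
    "unset_bit v (flip_config n x) = flip_config n (set_bit v x)"
    using flip_config_unset_bit[OF assms] flip_config_set_bit[OF assms] by simp_all
  then show ?thesis
    unfolding heat_bath_def pair_mass_def by (simp add: mu_flip_config add.commute)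
qed

lemma glauber_iter_flip_config:
  "x < N \<Longrightarrow> (glauber_op ^^ t) h (flip_config n x) = (glauber_op ^^ t) (\<lambda>y. h (flip_config n y)) x"
proof (induction t arbitrary: x)
  case (Suc t)
  have "(glauber_op ^^ Suc t) h (flip_config n x) = glauber_op ((glauber_op ^^ t) h) (flip_config n x)"
    by simp
  also have "\<dots> = glauber_op (\<lambda>y. (glauber_op ^^ t) h (flip_config n y)) x"
    using Suc.prems flip_config_less_power2[OF Suc.prems]
    by (simp add: glauber_op_eq_heat_bath heat_bath_flip_config)
  also have "\<dots> = (glauber_op ^^ Suc t) (\<lambda>y. h (flip_config n y)) x"
    using Suc.IH by (auto intro: glauber_op_cong)
  finally show ?case .
qed simp

lemma detailed_balance:
  assumes x: "x < N" and y: "y < N"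
  shows "mu x * P x y = mu y * P y x"
proof -
  define A where "A v \<longleftrightarrow> (\<forall>w<n. w \<noteq> v \<longrightarrow> (bit y w \<longleftrightarrow> bit x w))" for v
  have "mu x * P x y = (1 / real n) * (\<Sum>v<n. if A v then mu x * mu y / pair_mass v x else 0)"
    unfolding glauber_def A_def pair_mass_def by (auto simp: sum_distrib_left intro!: sum.cong)
  also have "\<dots> = (1 / real n) * (\<Sum>v<n. if A v then mu y * mu x / pair_mass v y else 0)"
  proof (intro arg_cong[where f = "\<lambda>u. (1 / real n) * u"] sum.cong refl)
    fix v assume v: "v \<in> {..<n}"
    show "(if A v then mu x * mu y / pair_mass v x else 0) = (if A v then mu y * mu x / pair_mass v y else 0)"
    proof (cases "A v")
      case True
      have "set_bit v x = set_bit v y" "unset_bit v x = unset_bit v y"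
        using True v x y
        by (intro config_eqI[of _ n];
            auto simp: set_bit_less_power2 unset_bit_less_power2 bit_set_bit_iff bit_unset_bit_iff A_def)+
      then show ?thesis by (simp add: pair_mass_def mult.commute)
    qed simp
  qed
  also have "\<dots> = mu y * P y x"
    unfolding glauber_def A_def pair_mass_def by (auto simp: sum_distrib_left mult_ac intro!: sum.cong)
  finally show ?thesis .
qed

lemma glauber_iter_stationary: "(\<Sum>x<N. mu x * (glauber_op ^^ t) h x) = (\<Sum>y<N. mu y * h y)"
proof (induction t arbitrary: h)
  case (Suc t)
  have "(\<Sum>x<N. mu x * glauber_op h x) = (\<Sum>y<N. \<Sum>x<N. mu x * P x y * h y)"
    unfolding glauber_op_def by (subst sum.swap) (simp add: sum_distrib_left mult_ac)
  also have "\<dots> = (\<Sum>y<N. mu y * h y * (\<Sum>x<N. P y x))"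
    by (intro sum.cong refl) (simp add: detailed_balance sum_distrib_left mult_ac)
  also have "\<dots> = (\<Sum>y<N. mu y * h y)"
    by (simp add: glauber_row_sum)
  finally show ?case
    using Suc.IH[of "glauber_op h"] by (simp add: funpow_Suc_right del: funpow.simps)
qed simp

lemma glauber_mat_carrier: "M \<in> carrier_mat N N"
  by (simp add: glauber_mat_def)

lemma glauber_mat_index: "x < N \<Longrightarrow> y < N \<Longrightarrow> M $$ (x, y) = P x y"
  by (simp add: glauber_mat_def)

lemma glauber_mat_mult_vec:
  assumes "v \<in> carrier_vec N" "x < N"
  shows "(M *\<^sub>v v) $ x = glauber_op (\<lambda>y. v $ y) x"
  using assms glauber_mat_carrier
  by (auto simp: scalar_prod_def glauber_op_def glauber_mat_index atLeast0LessThan intro!: sum.cong)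

lemma glauber_mat_pow_apply:
  "x < N \<Longrightarrow> (\<Sum>y<N. (M ^\<^sub>m t) $$ (x, y) * h y) = (glauber_op ^^ t) h x"
proof (induction t arbitrary: h x)
  case 0
  then show ?case
    using glauber_mat_carrier by (simp add: if_distrib if_distribR cong: if_cong)
next
  case (Suc t)
  have dims: "dim_row (M ^\<^sub>m t) = N" "dim_col (M ^\<^sub>m t) = N"
    using glauber_mat_carrier by auto
  have entry: "(M ^\<^sub>m Suc t) $$ (x, y) = (\<Sum>k<N. (M ^\<^sub>m t) $$ (x, k) * P k y)" if "y < N" for y
    using dims Suc.prems that glauber_mat_carrier
    by (auto simp: index_mult_mat scalar_prod_def glauber_mat_index atLeast0LessThan intro!: sum.cong)
  have "(\<Sum>y<N. (M ^\<^sub>m Suc t) $$ (x, y) * h y) = (\<Sum>k<N. (M ^\<^sub>m t) $$ (x, k) * glauber_op h k)"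
    unfolding glauber_op_def using entry
    by (simp add: sum_distrib_left sum_distrib_right mult_ac) (rule sum.swap)
  also have "\<dots> = (glauber_op ^^ Suc t) h x"
    using Suc.IH[OF Suc.prems] by (simp add: funpow_Suc_right del: funpow.simps)
  finally show ?case .
qed

lemma glauber_mat_pow_entry:
  "x < N \<Longrightarrow> s < N \<Longrightarrow> (M ^\<^sub>m t) $$ (x, s) = (glauber_op ^^ t) (\<lambda>y. if y = s then 1 else 0) x"
  using glauber_mat_pow_apply[of x t "\<lambda>y. if y = s then 1 else 0"] by (simp add: if_distrib cong: if_cong)

lemma glauber_mat_pow_row_sum: "x < N \<Longrightarrow> (\<Sum>y<N. (M ^\<^sub>m t) $$ (x, y)) = 1"
  using glauber_mat_pow_apply[of x t "\<lambda>_. 1"] glauber_iter_bounds[of 1 "\<lambda>_. 1" 1 x t] by simp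

lemma tv_from_minus:
  "(\<Sum>s<N. \<bar>(M ^\<^sub>m t) $$ (0, s) - mu s\<bar>) = 2 * tv_from_plus n E J t"
proof -
  have top: "all_plus n < N" by (rule all_plus_less_power2)
  have flip_entry: "(M ^\<^sub>m t) $$ (0, s) = (M ^\<^sub>m t) $$ (all_plus n, flip_config n s)" if s: "s < N" for s
  proof -
    have "(M ^\<^sub>m t) $$ (0, s)
        = (glauber_op ^^ t) (\<lambda>y. if y = s then 1 else 0) (flip_config n (all_plus n))"
      using glauber_mat_pow_entry[of 0 s t] s by (simp add: flip_config_all_plus)
    also have "\<dots> = (glauber_op ^^ t) (\<lambda>y. if flip_config n y = s then 1 else 0) (all_plus n)"
      by (rule glauber_iter_flip_config[OF top])
    also have "(\<lambda>y. if flip_config n y = s then 1 else (0::real)) = (\<lambda>y. if y = flip_config n s then 1 else 0)"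
      by (rule ext) (metis flip_config_flip_config)
    finally show ?thesis
      using glauber_mat_pow_entry[OF top flip_config_less_power2[OF s]] by simp
  qed
  have "(\<Sum>s<N. \<bar>(M ^\<^sub>m t) $$ (0, s) - mu s\<bar>)
      = (\<Sum>s<N. \<bar>(M ^\<^sub>m t) $$ (all_plus n, flip_config n s) - mu (flip_config n s)\<bar>)"
    by (intro sum.cong refl) (simp add: flip_entry mu_flip_config)
  also have "\<dots> = (\<Sum>s<N. \<bar>(M ^\<^sub>m t) $$ (all_plus n, s) - mu s\<bar>)"
    by (rule sum.reindex_bij_betw[OF bij_betw_flip_config])
  finally show ?thesis
    unfolding tv_from_plus_def by simp
qed

subsection \<open>Existence of the mixing time\<close>

lemma heat_bath_nonneg: "(\<And>y. y < N \<Longrightarrow> g y \<ge> 0) \<Longrightarrow> x < N \<Longrightarrow> v < n \<Longrightarrow> heat_bath v g x \<ge> 0"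
  unfolding heat_bath_def
  by (intro divide_nonneg_nonneg add_nonneg_nonneg mult_nonneg_nonneg less_imp_le[OF mu_pos]
      less_imp_le[OF pair_mass_pos]) (auto simp: set_bit_less_power2 unset_bit_less_power2)

lemma glauber_op_pos:
  assumes x: "x < N" and v: "v < n" and g: "\<And>y. y < N \<Longrightarrow> g y \<ge> 0"
    and z: "z \<in> {set_bit v x, unset_bit v x}" and gz: "g z > 0"
  shows "glauber_op g x > 0"
proof -
  have "0 < mu z * g z"
    using gz mu_pos by simp
  moreover have "0 \<le> mu (set_bit v x) * g (set_bit v x)"
    using g[OF set_bit_less_power2[OF v x]] mu_pos[of "set_bit v x"] by simp
  moreover have "0 \<le> mu (unset_bit v x) * g (unset_bit v x)"
    using g[OF unset_bit_less_power2[OF x]] mu_pos[of "unset_bit v x"] by simp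
  ultimately have "heat_bath v g x > 0"
    using z pair_mass_pos unfolding heat_bath_def by auto
  then have "(\<Sum>u<n. heat_bath u g x) > 0"
    using heat_bath_nonneg[OF g x] v by (intro sum_pos2[of _ v]) auto
  then show ?thesis
    unfolding glauber_op_eq_heat_bath[OF x] using n_pos by simp
qed

text \<open>Resampling the vertices 0, ..., i-1 in turn leads from x to any z that agrees with x
  on the bits from i on.\<close>

lemma glauber_iter_pos:
  "i \<le> n \<Longrightarrow> x < N \<Longrightarrow> (\<And>y. y < N \<Longrightarrow> g y \<ge> 0) \<Longrightarrow> z < N \<Longrightarrow> g z > 0 \<Longrightarrow>
   (\<forall>w. i \<le> w \<longrightarrow> (bit z w \<longleftrightarrow> bit x w)) \<Longrightarrow> (glauber_op ^^ i) g x > 0"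
proof (induction i arbitrary: x g z)
  case 0
  then have "z = x" by (intro bit_eqI) auto
  then show ?case using 0 by simp
next
  case (Suc i)
  then have i: "i < n" by simp
  define z' where "z' = (if bit x i then set_bit i z else unset_bit i z)"
  have z'_less: "z' < N"
    unfolding z'_def using set_bit_less_power2[OF i Suc.prems(4)] unset_bit_less_power2[OF Suc.prems(4)]
    by auto
  have "set_bit i z' = set_bit i z" "unset_bit i z' = unset_bit i z"
    unfolding z'_def by (rule bit_eqI; auto simp: bit_set_bit_iff bit_unset_bit_iff)+
  moreover have "z = set_bit i z \<or> z = unset_bit i z"
    by (cases "bit z i") (auto intro!: bit_eqI simp: bit_set_bit_iff bit_unset_bit_iff)
  ultimately have "glauber_op g z' > 0"
    using glauber_op_pos[of z' i g z] z'_less i Suc.prems(3,5) by auto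
  moreover have "\<forall>w. i \<le> w \<longrightarrow> (bit z' w \<longleftrightarrow> bit x w)"
  proof (intro allI impI)
    fix w assume "i \<le> w"
    then consider "w = i" | "Suc i \<le> w" by linarith
    then show "bit z' w \<longleftrightarrow> bit x w"
      using Suc.prems(6) by cases (auto simp: z'_def bit_set_bit_iff bit_unset_bit_iff)
  qed
  ultimately have "(glauber_op ^^ i) (glauber_op g) x > 0"
    using Suc.IH[of x "glauber_op g" z'] i Suc.prems(2,3) z'_less glauber_op_nonneg by auto
  then show ?case
    by (simp add: funpow_Suc_right del: funpow.simps)
qed

lemma glauber_mat_pow_n_pos:
  assumes x: "x < N" and y: "y < N"
  shows "(M ^\<^sub>m n) $$ (x, y) > 0"
proof -
  have "(glauber_op ^^ n) (\<lambda>u. if u = y then 1 else 0) x > 0"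
    by (rule glauber_iter_pos[OF le_refl x _ y]) (use x y in \<open>auto simp: less_power2_iff_bits\<close>)
  then show ?thesis
    using glauber_mat_pow_entry[OF x y] by simp
qed

lemma glauber_power_oscillation_decay:
  obtains c :: real where "c < 1"
    "\<And>k h D x x'. (\<And>y y'. y < N \<Longrightarrow> y' < N \<Longrightarrow> h y - h y' \<le> D) \<Longrightarrow> x < N \<Longrightarrow> x' < N \<Longrightarrow>
      (glauber_op ^^ (n * k)) h x - (glauber_op ^^ (n * k)) h x' \<le> c ^ k * D"
proof -
  define Q where "Q x y = (M ^\<^sub>m n) $$ (x, y)" for x y
  define entries where "entries = (\<lambda>(x, y). Q x y) ` ({..<N} \<times> {..<N})"
  define \<delta> where "\<delta> = Min entries"
  have entries: "finite entries" "entries \<noteq> {}"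
    unfolding entries_def by (auto simp: lessThan_empty_iff)
  have Q_ge: "\<delta> \<le> Q x y" if "x < N" "y < N" for x y
    unfolding \<delta>_def using entries that by (intro Min_le) (auto simp: entries_def)
  have "\<delta> \<in> entries"
    unfolding \<delta>_def using entries by (rule Min_in)
  then have "\<delta> > 0"
    using glauber_mat_pow_n_pos unfolding entries_def Q_def by auto
  have step: "(glauber_op ^^ n) h x - (glauber_op ^^ n) h x' \<le> (1 - real N * \<delta>) * D"
    if "\<And>y y'. y < N \<Longrightarrow> y' < N \<Longrightarrow> h y - h y' \<le> D" "x < N" "x' < N" for h D x x'
    using kernel_oscillation_contract[of "{..<N}" \<delta> Q h D x x'] that Q_ge
    by (simp add: Q_def glauber_mat_pow_apply glauber_mat_pow_row_sum lessThan_empty_iff)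
  have "(glauber_op ^^ (n * k)) h x - (glauber_op ^^ (n * k)) h x' \<le> (1 - real N * \<delta>) ^ k * D"
    if "\<And>y y'. y < N \<Longrightarrow> y' < N \<Longrightarrow> h y - h y' \<le> D" "x < N" "x' < N" for k h D x x'
    using that
  proof (induction k arbitrary: h D x x')
    case (Suc k)
    have "(glauber_op ^^ (n * k)) ((glauber_op ^^ n) h) x - (glauber_op ^^ (n * k)) ((glauber_op ^^ n) h) x'
        \<le> (1 - real N * \<delta>) ^ k * ((1 - real N * \<delta>) * D)"
      using Suc.prems by (intro Suc.IH step) auto
    moreover have "glauber_op ^^ (n * Suc k) = glauber_op ^^ (n * k) \<circ> glauber_op ^^ n"
      by (simp add: add.commute flip: funpow_add)
    ultimately show ?case
      by (simp add: mult_ac)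
  qed simp
  moreover have "1 - real N * \<delta> < 1"
    using \<open>\<delta> > 0\<close> by simp
  ultimately show ?thesis
    using that by blast
qed

lemma tv_from_plus_le_test_functions:
  assumes "\<And>h x. (\<And>y. \<bar>h y\<bar> \<le> 1) \<Longrightarrow> x < N \<Longrightarrow>
      (glauber_op ^^ t) h (all_plus n) - (glauber_op ^^ t) h x \<le> \<epsilon>"
  shows "tv_from_plus n E J t \<le> \<epsilon> / 2"
proof -
  define sg where "sg s = (if (M ^\<^sub>m t) $$ (all_plus n, s) \<ge> mu s then 1 else (-1::real))" for s
  have top: "all_plus n < N" by (rule all_plus_less_power2)
  have "(\<Sum>s<N. \<bar>(M ^\<^sub>m t) $$ (all_plus n, s) - mu s\<bar>)
      = (\<Sum>s<N. (M ^\<^sub>m t) $$ (all_plus n, s) * sg s - mu s * sg s)"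
    by (intro sum.cong refl) (auto simp: sg_def)
  also have "\<dots> = (glauber_op ^^ t) sg (all_plus n) - (\<Sum>x<N. mu x * (glauber_op ^^ t) sg x)"
    by (simp add: sum_subtractf glauber_mat_pow_apply[OF top] glauber_iter_stationary)
  also have "\<dots> = (\<Sum>x<N. mu x * ((glauber_op ^^ t) sg (all_plus n) - (glauber_op ^^ t) sg x))"
    by (simp add: right_diff_distrib sum_subtractf mu_sum flip: sum_distrib_right)
  also have "\<dots> \<le> (\<Sum>x<N. mu x * \<epsilon>)"
    using assms[of sg] mu_pos by (intro sum_mono mult_left_mono) (auto simp: sg_def less_imp_le)
  also have "\<dots> = \<epsilon>"
    by (simp add: mu_sum flip: sum_distrib_right)
  finally show ?thesis
    unfolding tv_from_plus_def by simp
qed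

lemma ex_tv_from_plus_le: "\<exists>t. tv_from_plus n E J t \<le> 1/4"
proof -
  obtain c :: real where "c < 1" and decay:
    "\<And>k h D x x'. (\<And>y y'. y < N \<Longrightarrow> y' < N \<Longrightarrow> h y - h y' \<le> D) \<Longrightarrow> x < N \<Longrightarrow> x' < N \<Longrightarrow>
      (glauber_op ^^ (n * k)) h x - (glauber_op ^^ (n * k)) h x' \<le> c ^ k * D"
    using glauber_power_oscillation_decay by blast
  obtain k where "c ^ k < 1/4"
    using real_arch_pow_inv[OF _ \<open>c < 1\<close>, of "1/4"] by auto
  have "tv_from_plus n E J (n * k) \<le> c ^ k * 2 / 2"
  proof (rule tv_from_plus_le_test_functions)
    fix h :: "nat \<Rightarrow> real" and x assume "\<And>y. \<bar>h y\<bar> \<le> 1" "x < N"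
    then show "(glauber_op ^^ (n * k)) h (all_plus n) - (glauber_op ^^ (n * k)) h x \<le> c ^ k * 2"
      using decay[of h 2 "all_plus n" x k] all_plus_less_power2 abs_le_iff by (smt (verit))
  qed
  then show ?thesis
    using \<open>c ^ k < 1/4\<close> by (intro exI[of _ "n * k"]) simp
qed

lemma tv_at_tmix_plus: "tv_from_plus n E J (tmix_plus n E J) \<le> 1/4"
  unfolding tmix_plus_def by (rule LeastI_ex[OF ex_tv_from_plus_le])

subsection \<open>Relaxation of increasing functions\<close>

lemma glauber_iter_halves_oscillation:
  assumes tv: "tv_from_plus n E J T \<le> 1/4" and h: "config_increasing n h"
    and osc: "\<And>y y'. y < N \<Longrightarrow> y' < N \<Longrightarrow> h y - h y' \<le> D"
    and x: "x < N" and x': "x' < N"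
  shows "(glauber_op ^^ T) h x - (glauber_op ^^ T) h x' \<le> D / 2"
proof -
  define Q where "Q x y = (M ^\<^sub>m T) $$ (x, y)" for x y
  define top where "top = all_plus n"
  have top: "top < N" and zero: "(0::nat) < N"
    unfolding top_def by (simp_all add: all_plus_less_power2)
  have increasing_le: "g 0 \<le> g y \<and> g y \<le> g top" if "config_increasing n g" "y < N" for g y
    using that top zero config_le_zero[of n y] config_le_all_plus[of n y]
    unfolding config_increasing_def top_def by blast
  have "(glauber_op ^^ T) h x - (glauber_op ^^ T) h x' \<le> (glauber_op ^^ T) h top - (glauber_op ^^ T) h 0"
    using increasing_le[OF glauber_iter_increasing[OF h, of T] x]
      increasing_le[OF glauber_iter_increasing[OF h, of T] x']
    by linarith
  also have "\<dots> = (\<Sum>s<N. Q top s * h s) - (\<Sum>s<N. Q 0 s * h s)"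
    unfolding Q_def by (simp add: glauber_mat_pow_apply top)
  also have "\<dots> \<le> (\<Sum>s<N. \<bar>Q top s - Q 0 s\<bar>) * (D / 2)"
  proof (rule sum_diff_le_l1_times_radius)
    show "sum (Q top) {..<N} = sum (Q 0) {..<N}"
      unfolding Q_def using glauber_mat_pow_row_sum top by simp
    show "\<bar>h s - (h top + h 0) / 2\<bar> \<le> D / 2" if "s \<in> {..<N}" for s
      using increasing_le[OF h, of s] osc[OF top zero] that by (simp add: abs_le_iff field_simps)
  qed
  also have "\<dots> \<le> 1 * (D / 2)"
  proof (rule mult_right_mono)
    have "(\<Sum>s<N. \<bar>Q top s - Q 0 s\<bar>) \<le> (\<Sum>s<N. \<bar>Q top s - mu s\<bar> + \<bar>Q 0 s - mu s\<bar>)"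
      by (rule sum_mono) linarith
    also have "\<dots> = 4 * tv_from_plus n E J T"
      using tv_from_minus[of T] unfolding Q_def top_def tv_from_plus_def by (simp add: sum.distrib)
    finally show "(\<Sum>s<N. \<bar>Q top s - Q 0 s\<bar>) \<le> 1"
      using tv by simp
    show "0 \<le> D / 2"
      using osc[OF zero zero] by simp
  qed
  finally show ?thesis by simp
qed

lemma glauber_iter_oscillation_decay:
  assumes tv: "tv_from_plus n E J T \<le> 1/4"
  shows "config_increasing n h \<Longrightarrow> (\<And>y y'. y < N \<Longrightarrow> y' < N \<Longrightarrow> h y - h y' \<le> D) \<Longrightarrow>
    x < N \<Longrightarrow> x' < N \<Longrightarrow> (glauber_op ^^ (T * k)) h x - (glauber_op ^^ (T * k)) h x' \<le> D / 2 ^ k"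
proof (induction k arbitrary: h D x x')
  case (Suc k)
  have "(glauber_op ^^ (T * k)) ((glauber_op ^^ T) h) x - (glauber_op ^^ (T * k)) ((glauber_op ^^ T) h) x'
      \<le> (D / 2) / 2 ^ k"
    using Suc.prems
    by (intro Suc.IH glauber_iter_increasing glauber_iter_halves_oscillation[OF tv]) auto
  moreover have "glauber_op ^^ (T * Suc k) = glauber_op ^^ (T * k) \<circ> glauber_op ^^ T"
    by (simp add: add.commute flip: funpow_add)
  ultimately show ?case
    by simp
qed simp

lemma eigenfunction_pow_le_half:
  assumes tv: "tv_from_plus n E J T \<le> 1/4"
    and eigen: "\<And>x. x < N \<Longrightarrow> glauber_op f x = lam * f x"
    and a: "a < N" and b: "b < N" and "f b < f a" and "0 < lam"
  shows "2 * lam ^ T \<le> 1"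
proof (rule ccontr)
  assume "\<not> 2 * lam ^ T \<le> 1"
  obtain g1 g2 D where g: "config_increasing n g1" "config_increasing n g2"
    and f_eq: "\<And>y. f y = g1 y - g2 y"
    and osc: "\<And>y y'. y < N \<Longrightarrow> y' < N \<Longrightarrow> g1 y - g1 y' \<le> D \<and> g2 y - g2 y' \<le> D"
    using increasing_difference_decomposition[of n f] by blast
  have "(2 * lam ^ T) ^ k \<le> 2 * D / (f a - f b)" for k
  proof -
    have "(lam ^ T) ^ k * (f a - f b) = (glauber_op ^^ (T * k)) f a - (glauber_op ^^ (T * k)) f b"
      using glauber_iter_eigen[OF eigen] a b by (simp add: power_mult algebra_simps)
    also have "\<dots> = ((glauber_op ^^ (T * k)) g1 a - (glauber_op ^^ (T * k)) g1 b)
        - ((glauber_op ^^ (T * k)) g2 a - (glauber_op ^^ (T * k)) g2 b)"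
      unfolding f_eq glauber_iter_diff by simp
    also have "\<dots> \<le> D / 2 ^ k + D / 2 ^ k"
      using glauber_iter_oscillation_decay[OF tv g(1) _ a b, of D k]
        glauber_iter_oscillation_decay[OF tv g(2) _ b a, of D k] osc by fastforce
    finally have "(lam ^ T) ^ k * 2 ^ k * (f a - f b) \<le> 2 * D"
      by (simp add: field_simps)
    then show ?thesis
      using \<open>f b < f a\<close> by (simp add: pos_le_divide_eq power_mult_distrib mult_ac)
  qed
  moreover obtain k where "2 * D / (f a - f b) < (2 * lam ^ T) ^ k"
    using real_arch_pow \<open>\<not> 2 * lam ^ T \<le> 1\<close> by (metis not_le)
  ultimately show False
    by (meson not_le)
qed

lemma char_poly_root_one: "poly (char_poly M) 1 = 0"
proof -
  let ?one = "vec N (\<lambda>_. 1 :: real)"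
  have "M *\<^sub>v ?one = 1 \<cdot>\<^sub>v ?one"
  proof (rule eq_vecI)
    fix i assume "i < dim_vec (1 \<cdot>\<^sub>v ?one)"
    then have i: "i < N" by simp
    have "glauber_op (\<lambda>y. ?one $ y) i = glauber_op (\<lambda>_. 1) i"
      by (rule glauber_op_cong) simp
    then show "(M *\<^sub>v ?one) $ i = (1 \<cdot>\<^sub>v ?one) $ i"
      using glauber_mat_mult_vec[of ?one i] glauber_op_const[OF i] i by simp
  qed (use glauber_mat_carrier in simp)
  moreover have "?one \<noteq> 0\<^sub>v N"
    by (metis index_vec index_zero_vec(1) zero_less_numeral zero_less_power zero_neq_one)
  ultimately have "eigenvalue M 1"
    unfolding eigenvalue_def eigenvector_def using glauber_mat_carrier by (intro exI[of _ ?one]) auto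
  then show ?thesis
    using eigenvalue_root_char_poly[OF glauber_mat_carrier] by simp
qed

lemma eigenvalue_pow_tmix_plus_le_half:
  assumes "eigenvalue M lam" "0 < lam" "lam < 1"
  shows "2 * lam ^ tmix_plus n E J \<le> 1"
proof -
  obtain v where v: "v \<in> carrier_vec N" "v \<noteq> 0\<^sub>v N" "M *\<^sub>v v = lam \<cdot>\<^sub>v v"
    using assms(1) glauber_mat_carrier unfolding eigenvalue_def eigenvector_def by auto
  define f where "f y = v $ y" for y
  have eigen: "glauber_op f x = lam * f x" if "x < N" for x
    using glauber_mat_mult_vec[OF v(1) that] v(3) v(1) that unfolding f_def by simp
  obtain a where a: "a < N" "f a \<noteq> 0"
    using v(1,2) unfolding f_def by (metis carrier_vecD eq_vecI index_zero_vec)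
  obtain b where b: "b < N" "f b \<noteq> f a"
  proof (rule ccontr)
    assume "\<not> thesis"
    then have "glauber_op f a = glauber_op (\<lambda>_. f a) a"
      using that by (intro glauber_op_cong) blast
    then have "lam * f a = f a"
      using eigen[OF a(1)] glauber_op_const[OF a(1)] by simp
    then show False
      using a(2) assms(3) by simp
  qed
  show ?thesis
    using eigenfunction_pow_le_half[OF tv_at_tmix_plus eigen] a(1) b assms(2)
    by (cases "f b < f a") (auto simp: not_less order.order_iff_strict)
qed

end

theorem lemma2p1:
  fixes n :: nat and E :: "nat set set" and J :: "nat set \<Rightarrow> real"
  assumes "n \<ge> 1"
    and "E \<subseteq> graph_edges n"
    and "\<forall>e\<in>E. J e \<ge> 0"
  shows "real (tmix_plus n E J) \<ge> ln 2 * (1 / spectral_gap n E J - 1)"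
proof -
  interpret ising_glauber n E J
    using assms by unfold_locales
  let ?lam = "second_largest_eigenvalue (glauber_mat n E J)"
  have "poly (char_poly (glauber_mat n E J)) ?lam = 0"
    using second_largest_eigenvalue_is_root[OF glauber_mat_carrier _ char_poly_root_one] assms(1)
    by simp
  then have "eigenvalue (glauber_mat n E J) ?lam"
    using eigenvalue_root_char_poly[OF glauber_mat_carrier] by simp
  then have "0 < ?lam \<Longrightarrow> ?lam < 1 \<Longrightarrow> 2 * ?lam ^ tmix_plus n E J \<le> 1"
    by (rule eigenvalue_pow_tmix_plus_le_half)
  then show ?thesis
    unfolding spectral_gap_def by (auto intro: ln2_relaxation_bound)
qed

end
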